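(* Let $G$ be a finite abelian group of order $N$, and let $e = \exp G$ be the exponent of $G$, that is, the least common multiple of the orders of the elements of $G$. For $1 \leq r \leq N$, define \[D(N, e, r) = \{d_1 d_2 \mid d_1 \in D(N/e),\ d_2 \in D(e),\ d_1 e \geq r\},\] where $D(n)$ denotes the set of positive divisors of $n$. Then for every $1 \le r \le N$, \[\rho_G^-(r) \leq \min_{d \in D(N, e, r)} d \left(2\left\lceil\frac{r}{d}\right\rceil - 1\right).\]
   Context: For a finite abelian group $(G,+)$ of order $N$ and subsets $A, B \subseteq G$, write $A - B = \{a - b \mid a \in A, b \in B\}$. For $1 \le r \le N$ define $\rho^-_G(r) = \min \{|A - A| \mid A \subseteq G, |A| = r\}$. *)

theory Defs
  imports "HOL-Algebra.Algebra"
begin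

definition diff_set :: "('a, 'b) monoid_scheme \<Rightarrow> 'a set \<Rightarrow> 'a set" where
  "diff_set G A = {a \<otimes>\<^bsub>G\<^esub> inv\<^bsub>G\<^esub> b | a b. a \<in> A \<and> b \<in> A}"

definition rho_minus :: "('a, 'b) monoid_scheme \<Rightarrow> nat \<Rightarrow> nat" where
  "rho_minus G r = Min {card (diff_set G A) | A. A \<subseteq> carrier G \<and> card A = r}"

definition group_exponent :: "('a, 'b) monoid_scheme \<Rightarrow> nat" where
  "group_exponent G = Lcm (group.ord G ` carrier G)"

definition pos_divisors :: "nat \<Rightarrow> nat set" where
  "pos_divisors n = {d. 0 < d \<and> d dvd n}"

definition Dset :: "nat \<Rightarrow> nat \<Rightarrow> nat \<Rightarrow> nat set" where
  "Dset N e r = {d1 * d2 | d1 d2. d1 \<in> pos_divisors (N div e) \<and> d2 \<in> pos_divisors e \<and> d1 * e \<ge> r}"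

end

theory Submission
  imports Defs
begin

text \<open>Let \<open>g\<close> be an element of maximal order; in an abelian group every order divides
  \<open>ord g\<close>, so \<open>ord g = e\<close>. For \<open>d\<^sub>1 | N/e\<close> there is a subgroup \<open>K\<close> of order \<open>d\<^sub>1\<close> meeting
  \<open>\<langle>g\<rangle>\<close> trivially: it is grown one prime \<open>p\<close> at a time by adjoining an element outside
  \<open>K\<langle>g\<rangle>\<close> whose \<open>p\<close>-th power lies in \<open>K\<close>. For \<open>d\<^sub>2 | e\<close>, \<open>m = e/d\<^sub>2\<close> and
  \<open>k = \<lceil>r/(d\<^sub>1d\<^sub>2)\<rceil> \<le> m\<close>, the set \<open>A = K \<cdot> {g^(i + m j) | 0 \<le> i < k, 0 \<le> j < d\<^sub>2}\<close> has
  \<open>d\<^sub>1d\<^sub>2k \<ge> r\<close> elements, while modulo \<open>e\<close> every difference of two exponents is of the form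
  \<open>i + m j\<close> with \<open>|i| < k\<close> and \<open>0 \<le> j < d\<^sub>2\<close>; hence any \<open>r\<close>-subset of \<open>A\<close> has at most
  \<open>d\<^sub>1d\<^sub>2(2k - 1)\<close> differences.\<close>

definition adjoin :: "('a, 'b) monoid_scheme \<Rightarrow> 'a set \<Rightarrow> 'a \<Rightarrow> 'a set" where
  "adjoin G H z = {h \<otimes>\<^bsub>G\<^esub> z [^]\<^bsub>G\<^esub> (i::int) | h i. h \<in> H}"

lemma adjoin_memI: "h \<in> H \<Longrightarrow> x = h \<otimes>\<^bsub>G\<^esub> z [^]\<^bsub>G\<^esub> (i::int) \<Longrightarrow> x \<in> adjoin G H z"
  unfolding adjoin_def by blast

lemma adjoin_memE:
  assumes "x \<in> adjoin G H z"
  obtains h i where "h \<in> H" "x = h \<otimes>\<^bsub>G\<^esub> z [^]\<^bsub>G\<^esub> (i::int)"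
  using assms unfolding adjoin_def by blast

context group begin

lemma subset_adjoin:
  assumes "subgroup H G" "z \<in> carrier G"
  shows "H \<subseteq> adjoin G H z"
proof
  fix h assume "h \<in> H"
  with assms have "h = h \<otimes> z [^] (0::int)" using subgroup.subset by fastforce
  with \<open>h \<in> H\<close> show "h \<in> adjoin G H z" by (rule adjoin_memI)
qed

lemma pow_mem_adjoin: "subgroup H G \<Longrightarrow> z \<in> carrier G \<Longrightarrow> z [^] (i::int) \<in> adjoin G H z"
  by (rule adjoin_memI[of "\<one>"]) (auto simp: subgroup.one_closed)

lemma inj_on_adjoin_param:
  assumes H: "subgroup H G" and z: "z \<in> carrier G"
    and nmem: "\<And>i::int. 0 < i \<Longrightarrow> i < n \<Longrightarrow> z [^] i \<notin> H"
  shows "inj_on (\<lambda>(h, i). h \<otimes> z [^] (i::int)) (H \<times> {0..<n})"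
proof -
  have eq: "h1 = h2 \<and> i1 = i2"
    if h: "h1 \<in> H" "h2 \<in> H" and i: "i1 \<in> {0..<n}" "i2 \<in> {0..<n}" "i1 \<le> i2"
      and e: "h1 \<otimes> z [^] i1 = h2 \<otimes> z [^] i2" for h1 h2 i1 i2
  proof -
    have c: "h1 \<in> carrier G" "h2 \<in> carrier G" using h subgroup.subset[OF H] by auto
    have "h1 \<otimes> z [^] i1 = (h2 \<otimes> z [^] (i2 - i1)) \<otimes> z [^] i1"
      using e c z by (simp add: m_assoc flip: int_pow_mult)
    then have h1: "h1 = h2 \<otimes> z [^] (i2 - i1)" using c z by (metis int_pow_closed m_closed r_cancel)
    then have "z [^] (i2 - i1) = inv h2 \<otimes> h1" using c z by (simp add: m_assoc[symmetric])
    also have "\<dots> \<in> H" using H h by (simp add: subgroup.m_closed subgroup.m_inv_closed)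
    finally have "i1 = i2" using nmem[of "i2 - i1"] i by (cases "i1 < i2") auto
    with h1 c z show ?thesis by simp
  qed
  show ?thesis
  proof (rule inj_onI)
    fix x y assume "x \<in> H \<times> {0..<n}" "y \<in> H \<times> {0..<n}"
      and "(\<lambda>(h, i). h \<otimes> z [^] i) x = (\<lambda>(h, i). h \<otimes> z [^] i) y"
    then show "x = y"
      using eq[of "fst x" "fst y" "snd x" "snd y"] eq[of "fst y" "fst x" "snd y" "snd x"]
      by (cases "snd x \<le> snd y") (auto simp: split_beta prod_eq_iff)
  qed
qed

lemma adjoin_eq_image:
  assumes H: "subgroup H G" and z: "z \<in> carrier G" and n: "n > 0"
    and zn: "z [^] (int n) \<in> H"
  shows "adjoin G H z = (\<lambda>(h, i). h \<otimes> z [^] (i::int)) ` (H \<times> {0..<int n})"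
proof
  show "adjoin G H z \<subseteq> (\<lambda>(h, i). h \<otimes> z [^] (i::int)) ` (H \<times> {0..<int n})"
  proof
    fix x assume "x \<in> adjoin G H z"
    then obtain h i where h: "h \<in> H" and x: "x = h \<otimes> z [^] (i::int)" by (rule adjoin_memE)
    have hc: "h \<in> carrier G" using h subgroup.subset[OF H] by auto
    have "z [^] i = (z [^] int n) [^] (i div int n) \<otimes> z [^] (i mod int n)"
      using z by (simp add: int_pow_pow flip: int_pow_mult)
    then have "x = (h \<otimes> (z [^] int n) [^] (i div int n)) \<otimes> z [^] (i mod int n)"
      using x hc z by (simp add: m_assoc)
    moreover have "h \<otimes> (z [^] int n) [^] (i div int n) \<in> H"
      by (rule subgroup.m_closed[OF H h subgroup_int_pow_closed[OF H zn]])
    moreover have "i mod int n \<in> {0..<int n}" using n by simp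
    ultimately show "x \<in> (\<lambda>(h, i). h \<otimes> z [^] (i::int)) ` (H \<times> {0..<int n})" by force
  qed
qed (auto intro: adjoin_memI)

lemma card_adjoin:
  assumes H: "subgroup H G" and z: "z \<in> carrier G" and n: "n > 0"
    and zn: "z [^] (int n) \<in> H"
    and nmem: "\<And>i::int. 0 < i \<Longrightarrow> i < int n \<Longrightarrow> z [^] i \<notin> H"
  shows "card (adjoin G H z) = n * card H"
proof -
  have "card (adjoin G H z) = card (H \<times> {0..<int n})"
    unfolding adjoin_eq_image[OF H z n zn]
    by (rule card_image[OF inj_on_adjoin_param[OF H z nmem]])
  then show ?thesis by (simp add: card_cartesian_product)
qed

end

lemma (in comm_group) subgroup_adjoin:
  assumes H: "subgroup H G" and z: "z \<in> carrier G"
  shows "subgroup (adjoin G H z) G"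
proof
  have Hc: "H \<subseteq> carrier G" using H subgroup.subset by blast
  show "adjoin G H z \<subseteq> carrier G"
    using Hc z by (auto elim!: adjoin_memE)
  show "\<one> \<in> adjoin G H z"
    using pow_mem_adjoin[OF H z, of 0] by simp
  fix a b assume "a \<in> adjoin G H z" and "b \<in> adjoin G H z"
  then obtain h i h' j where hh: "h \<in> H" "h' \<in> H"
    and ab: "a = h \<otimes> z [^] (i::int)" "b = h' \<otimes> z [^] (j::int)"
    by (auto elim!: adjoin_memE)
  have c: "h \<in> carrier G" "h' \<in> carrier G" using hh Hc by auto
  have "a \<otimes> b = (h \<otimes> h') \<otimes> z [^] (i + j)"
    using ab c z by (simp add: int_pow_mult m_ac)
  with hh show "a \<otimes> b \<in> adjoin G H z"
    by (intro adjoin_memI) (auto intro: subgroup.m_closed[OF H])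
  have "inv a = inv h \<otimes> z [^] (-i)"
    using ab c z by (simp add: inv_mult int_pow_neg)
  with hh show "inv a \<in> adjoin G H z"
    by (intro adjoin_memI) (auto intro: subgroup.m_inv_closed[OF H])
qed

context comm_group begin

lemma ord_mult_coprime:
  assumes x: "x \<in> carrier G" and y: "y \<in> carrier G" and cop: "coprime (ord x) (ord y)"
  shows "ord (x \<otimes> y) = ord x * ord y"
proof (rule dvd_antisym)
  show "ord (x \<otimes> y) dvd ord x * ord y" by (rule abelian_ord_mul_divides[OF x y])
  define k where "k = ord (x \<otimes> y)"
  have one: "x [^] k \<otimes> y [^] k = \<one>"
  proof -
    have "(x \<otimes> y) [^] k = \<one>" unfolding k_def using x y by simp
    then show ?thesis using x y by (simp add: nat_pow_distrib)
  qed
  have pow_ord_mult: "z [^] (ord z * n) = \<one>" if "z \<in> carrier G" for z n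
    using that by (metis nat_pow_one nat_pow_pow pow_ord_eq_1)
  have "x [^] (k * ord y) = (x [^] k \<otimes> y [^] k) [^] ord y"
    using x y pow_ord_mult[OF y] by (simp add: nat_pow_distrib nat_pow_pow mult.commute[of k])
  then have "ord x dvd k * ord y" using one x by (simp add: pow_eq_id)
  then have "ord x dvd k" using cop by (simp add: coprime_dvd_mult_left_iff)
  moreover have "y [^] (k * ord x) = (x [^] k \<otimes> y [^] k) [^] ord x"
    using x y pow_ord_mult[OF x] by (simp add: nat_pow_distrib nat_pow_pow mult.commute[of k])
  then have "ord y dvd k * ord x" using one y by (simp add: pow_eq_id)
  then have "ord y dvd k" using cop by (simp add: coprime_dvd_mult_left_iff coprime_commute)
  ultimately show "ord x * ord y dvd k" using cop by (simp add: divides_mult)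
qed

text \<open>If the \<open>p\<close>-part of \<open>ord x\<close> exceeds that of \<open>ord g\<close>, it can be traded in.\<close>
lemma exists_ord_greater:
  assumes fin: "finite (carrier G)" and x: "x \<in> carrier G" and g: "g \<in> carrier G"
    and ndvd: "\<not> ord x dvd ord g"
  shows "\<exists>y\<in>carrier G. ord g < ord y"
proof -
  have x0: "ord x \<noteq> 0" and g0: "ord g \<noteq> 0" using ord_ge_1[OF fin] x g by (auto simp: Suc_le_eq)
  have "\<not> (\<forall>p. Factorial_Ring.prime p \<longrightarrow> multiplicity p (ord x) \<le> multiplicity p (ord g))"
    using multiplicity_le_imp_dvd[OF x0] ndvd by blast
  then obtain p where p: "Factorial_Ring.prime p"
    and mult_less: "multiplicity p (ord g) < multiplicity p (ord x)"
    by (auto simp: not_le)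
  define a where "a = multiplicity p (ord x)"
  define b where "b = multiplicity p (ord g)"
  have p1: "p > 1" using prime_gt_1_nat[OF p] .
  obtain c where c: "ord x = p ^ a * c" using multiplicity_dvd[of p "ord x"] unfolding a_def by (elim dvdE)
  obtain d where d: "ord g = p ^ b * d" "\<not> p dvd d"
    using multiplicity_decompose'[OF g0 prime_elem_not_unit] p unfolding b_def by blast
  have c0: "c > 0" and d0: "d > 0" using c d x0 g0 by auto
  have ox: "ord (x [^] c) = p ^ a" using ord_pow[OF x, of c] c c0 by simp
  have og: "ord (g [^] (p ^ b)) = d" using ord_pow[OF g, of "p ^ b"] d p1 by simp
  have "ord (x [^] c \<otimes> g [^] (p ^ b)) = p ^ a * d"
    using ord_mult_coprime[of "x [^] c" "g [^] (p ^ b)"] x g d(2) p ox og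
    by (simp add: coprime_power_left_iff prime_imp_coprime)
  moreover have "p ^ b * d < p ^ a * d"
    using d0 p1 mult_less unfolding a_def b_def by (simp add: power_strict_increasing)
  ultimately have "ord g < ord (x [^] c \<otimes> g [^] (p ^ b))" using d(1) by simp
  then show ?thesis using x g by blast
qed

lemma exists_ord_dvd_all:
  assumes fin: "finite (carrier G)"
  obtains g where "g \<in> carrier G" "\<And>x. x \<in> carrier G \<Longrightarrow> ord x dvd ord g"
proof -
  have fi: "finite (ord ` carrier G)" using fin by simp
  have "ord ` carrier G \<noteq> {}" using one_closed by blast
  then have "Max (ord ` carrier G) \<in> ord ` carrier G" using Max_in[OF fi] by blast
  then obtain g where g: "g \<in> carrier G" "ord g = Max (ord ` carrier G)" by force
  have not_greater: "\<not> ord g < ord y" if "y \<in> carrier G" for y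
    using Max_ge[OF fi, of "ord y"] that g(2) by simp
  show ?thesis
  proof (rule that[OF g(1)])
    fix x assume "x \<in> carrier G"
    show "ord x dvd ord g"
      by (rule ccontr) (use exists_ord_greater[OF fin \<open>x \<in> carrier G\<close> g(1)] not_greater in blast)
  qed
qed

lemma group_exponent_eq_ord:
  assumes g: "g \<in> carrier G" and max: "\<And>x. x \<in> carrier G \<Longrightarrow> ord x dvd ord g"
  shows "group_exponent G = ord g"
  unfolding group_exponent_def
  by (rule dvd_antisym) (use g max in \<open>auto intro: Lcm_least dvd_Lcm\<close>)

end

context group begin

lemma mem_of_coprime_pows:
  assumes S: "subgroup S G" and z: "z \<in> carrier G"
    and a: "z [^] (a::int) \<in> S" and b: "z [^] (b::int) \<in> S" and cop: "coprime a b"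
  shows "z \<in> S"
proof -
  obtain u v where uv: "u * a + v * b = 1" using bezout_int[of a b] cop by (auto simp: coprime_iff_gcd_eq_1)
  have "z = z [^] (u * a + v * b)" using uv z by simp
  also have "\<dots> = (z [^] a) [^] u \<otimes> (z [^] b) [^] v"
    using z by (simp add: int_pow_pow mult.commute flip: int_pow_mult)
  also have "\<dots> \<in> S"
    using S a b by (simp add: subgroup.m_closed subgroup_int_pow_closed)
  finally show ?thesis .
qed

lemma card_subgroup_dvd:
  assumes P: "subgroup P G" and S: "subgroup S G" and PS: "P \<subseteq> S"
  shows "card P dvd card S"
proof -
  interpret S: group "G\<lparr>carrier := S\<rparr>" by (rule subgroup_imp_group[OF S])
  have "card (rcosets\<^bsub>G\<lparr>carrier := S\<rparr>\<^esub> P) * card P = card S"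
    using S.lagrange[OF subgroup_incl[OF P S PS]] by (simp add: order_def)
  then show ?thesis by (metis dvd_triv_right)
qed

text \<open>A weak form of Cauchy's theorem for the quotient \<open>G/S\<close>, obtained from a Sylow
  \<open>p\<close>-subgroup that cannot fit inside \<open>S\<close>.\<close>
lemma exists_prime_pow_mem:
  assumes fin: "finite (carrier G)" and S: "subgroup S G" and p: "Factorial_Ring.prime (p::nat)"
    and dvd: "p * card S dvd order G"
  obtains x where "x \<in> carrier G" "x \<notin> S" "x [^] p \<in> S"
proof -
  define a where "a = multiplicity p (order G)"
  have N0: "order G > 0" using fin order_gt_0_iff_finite by blast
  obtain P where P: "subgroup P G" "card P = p ^ a"
    using sylow_thm[of p G a "order G div p ^ a"] p fin is_group multiplicity_dvd[of p "order G"]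
    unfolding a_def by auto
  have "\<not> P \<subseteq> S"
  proof
    assume "P \<subseteq> S"
    then have "p ^ Suc a dvd p * card S" using card_subgroup_dvd[OF P(1) S] P(2) by simp
    then have "p ^ Suc a dvd order G" using dvd dvd_trans by blast
    then show False
      using power_dvd_iff_le_multiplicity[where p=p and n="Suc a" and x="order G"] N0 p
        prime_gt_1_nat[OF p]
      unfolding a_def by (simp add: prime_elem_not_unit del: power_Suc)
  qed
  then obtain y where y: "y \<in> P" "y \<notin> S" by blast
  have yc: "y \<in> carrier G" using y(1) P(1) subgroup.subset by blast
  have "y [^] (p ^ a) = \<one>"
  proof -
    interpret P: group "G\<lparr>carrier := P\<rparr>" by (rule subgroup_imp_group[OF P(1)])
    show ?thesis
      using P.pow_order_eq_1 y(1) P(2) by (simp add: order_def flip: nat_pow_consistent)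
  qed
  then have "\<exists>c. y [^] (p ^ c) \<in> S" using subgroup.one_closed[OF S] by metis
  then obtain c where "y [^] (p ^ c) \<notin> S" "y [^] (p ^ Suc c) \<in> S"
    using exists_least_lemma[of "\<lambda>c. y [^] (p ^ c) \<in> S"] y(2) yc by auto
  then show ?thesis
    using that[of "y [^] (p ^ c)"] yc by (simp add: nat_pow_pow mult.commute)
qed

lemma prime_dvd_of_pow_mem:
  assumes S: "subgroup S G" and x: "x \<in> carrier G" and nmem: "x \<notin> S"
    and p: "Factorial_Ring.prime (p::nat)" and xp: "x [^] p \<in> S" and xi: "x [^] (i::int) \<in> S"
  shows "int p dvd i"
proof (rule ccontr)
  assume "\<not> int p dvd i"
  then have "coprime (int p) i" using p by (simp add: prime_imp_coprime)
  then show False using mem_of_coprime_pows[OF S x _ xi, of "int p"] xp nmem by (simp add: int_pow_int)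
qed

lemma card_adjoin_prime_root:
  assumes K: "subgroup K G" and S: "subgroup S G" and KS: "K \<subseteq> S"
    and x: "x \<in> carrier G" and nmem: "x \<notin> S"
    and p: "Factorial_Ring.prime (p::nat)" and xp: "x [^] p \<in> K"
  shows "card (adjoin G K x) = p * card K"
proof (rule card_adjoin[OF K x])
  show "p > 0" using p prime_gt_0_nat by blast
  show "x [^] int p \<in> K" using xp by (simp add: int_pow_int)
  fix i :: int assume i: "0 < i" "i < int p"
  show "x [^] i \<notin> K"
    using prime_dvd_of_pow_mem[OF S x nmem p] xp KS i zdvd_imp_le by fastforce
qed

lemma adjoin_prime_root_inter:
  assumes K: "subgroup K G" and S: "subgroup S G" and KS: "K \<subseteq> S"
    and x: "x \<in> carrier G" and nmem: "x \<notin> S"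
    and p: "Factorial_Ring.prime (p::nat)" and xp: "x [^] p \<in> K"
  shows "adjoin G K x \<inter> S \<subseteq> K"
proof
  fix y assume "y \<in> adjoin G K x \<inter> S"
  then obtain h i where h: "h \<in> K" and y: "y = h \<otimes> x [^] (i::int)" "y \<in> S"
    by (auto elim: adjoin_memE)
  have hc: "h \<in> carrier G" using h K subgroup.subset by blast
  have "x [^] i = inv h \<otimes> y" using y hc x by (simp add: m_assoc[symmetric])
  also have "\<dots> \<in> S" using S h KS y(2) by (auto intro: subgroup.m_closed subgroup.m_inv_closed)
  finally obtain s where "i = int p * s"
    using prime_dvd_of_pow_mem[OF S x nmem p] xp KS by blast
  then have "x [^] i = (x [^] p) [^] s" using x by (simp add: int_pow_pow flip: int_pow_int)
  then show "y \<in> K"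
    using y(1) K h xp by (simp add: subgroup.m_closed subgroup_int_pow_closed)
qed

lemma pow_not_mem_of_trivial_inter:
  assumes g: "g \<in> carrier G" and avoid: "\<And>t::int. g [^] t \<in> K \<Longrightarrow> g [^] t = \<one>"
    and i: "0 < i" "i < int (ord g)"
  shows "g [^] i \<notin> K"
  using avoid[of i] int_pow_eq_id[OF g, of i] i zdvd_imp_le by fastforce

end

context comm_group begin

text \<open>Here \<open>p\<close> divides \<open>ord g\<close>, and because \<open>\<langle>g\<rangle>\<close> meets \<open>K\<close> trivially the \<open>\<langle>g\<rangle>\<close>-component of
  \<open>x [^] p\<close> is a \<open>p\<close>-th power of an element of \<open>\<langle>g\<rangle>\<close>, which can be divided off.\<close>
lemma exists_prime_root_in_subgroup:
  assumes fin: "finite (carrier G)" and g: "g \<in> carrier G"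
    and max: "\<And>x. x \<in> carrier G \<Longrightarrow> ord x dvd ord g"
    and K: "subgroup K G" and avoid: "\<And>t::int. g [^] t \<in> K \<Longrightarrow> g [^] t = \<one>"
    and p: "Factorial_Ring.prime (p::nat)"
    and x: "x \<in> carrier G" and nmem: "x \<notin> adjoin G K g" and xp: "x [^] p \<in> adjoin G K g"
  obtains y where "y \<in> carrier G" "y \<notin> adjoin G K g" "y [^] p \<in> K"
proof -
  define S where "S = adjoin G K g"
  have S: "subgroup S G" unfolding S_def by (rule subgroup_adjoin[OF K g])
  have Kc: "K \<subseteq> carrier G" using K subgroup.subset by blast
  have xe: "x [^] int (ord g) = \<one>" using max[OF x] x by (simp add: int_pow_eq_id)
  have "p dvd ord g"
    using prime_dvd_of_pow_mem[OF S x _ p, of "int (ord g)"] nmem xp xe subgroup.one_closed[OF S]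
    unfolding S_def by simp
  then obtain e' where e': "ord g = p * e'" by (elim dvdE)
  have e0: "ord g > 0" using ord_ge_1[OF fin g] by simp
  obtain k j where k: "k \<in> K" and xpkj: "x [^] int p = k \<otimes> g [^] (j::int)"
    using xp by (auto simp: int_pow_int elim: adjoin_memE)
  have kc: "k \<in> carrier G" using k Kc by auto
  have "\<one> = (x [^] int p) [^] int e'" using xe e' x by (simp add: int_pow_pow)
  also have "\<dots> = k [^] int e' \<otimes> g [^] (j * int e')"
    using kc g by (subst xpkj) (simp add: int_pow_distrib int_pow_pow)
  finally have "g [^] (j * int e') \<otimes> k [^] int e' = \<one>" using kc g by (simp add: m_comm)
  then have "inv (k [^] int e') = g [^] (j * int e')"
    by (rule inv_equality) (use kc g in simp_all)
  then have "g [^] (j * int e') = inv (k [^] int e')" ..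
  also have "\<dots> \<in> K" using K k by (simp add: subgroup.m_inv_closed subgroup_int_pow_closed)
  finally have "g [^] (j * int e') = \<one>" by (rule avoid)
  then have "int p * int e' dvd j * int e'" using g e' by (simp add: int_pow_eq_id)
  then obtain q where q: "j = int p * q" using e0 e' by (auto elim: dvdE)
  define y where "y = x \<otimes> g [^] (- q)"
  have yc: "y \<in> carrier G" unfolding y_def using x g by simp
  have "y [^] int p = x [^] int p \<otimes> g [^] (- j)"
    unfolding y_def using x g q by (simp add: int_pow_distrib int_pow_pow mult.commute del: int_pow_int)
  also have "\<dots> = k" using xpkj kc g by (simp add: m_assoc int_pow_neg del: int_pow_int)
  finally have "y [^] p = k" by (simp add: int_pow_int)
  moreover have "y \<notin> S"
  proof
    assume "y \<in> S"
    then have "y \<otimes> g [^] q \<in> S"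
      using S pow_mem_adjoin[OF K g] unfolding S_def by (auto intro: subgroup.m_closed)
    moreover have "y \<otimes> g [^] q = x" unfolding y_def using x g by (simp add: m_assoc flip: int_pow_mult)
    ultimately show False using nmem unfolding S_def by simp
  qed
  ultimately show ?thesis using that yc k unfolding S_def by blast
qed

lemma extend_subgroup_trivial_inter:
  assumes fin: "finite (carrier G)" and g: "g \<in> carrier G"
    and max: "\<And>x. x \<in> carrier G \<Longrightarrow> ord x dvd ord g"
    and K: "subgroup K G" and avoid: "\<And>t::int. g [^] t \<in> K \<Longrightarrow> g [^] t = \<one>"
    and p: "Factorial_Ring.prime (p::nat)" and dvd: "p * card K * ord g dvd order G"
  obtains K' where "subgroup K' G" "card K' = p * card K"
    "\<And>t::int. g [^] t \<in> K' \<Longrightarrow> g [^] t = \<one>"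
proof -
  define S where "S = adjoin G K g"
  have S: "subgroup S G" unfolding S_def by (rule subgroup_adjoin[OF K g])
  have KS: "K \<subseteq> S" unfolding S_def by (rule subset_adjoin[OF K g])
  have "card S = ord g * card K" unfolding S_def
  proof (rule card_adjoin[OF K g])
    show "ord g > 0" using ord_ge_1[OF fin g] by simp
    show "g [^] int (ord g) \<in> K" using g subgroup.one_closed[OF K] by (simp add: int_pow_int)
  qed (rule pow_not_mem_of_trivial_inter[OF g avoid])
  then have "p * card S dvd order G" using dvd by (simp add: mult_ac)
  then obtain x where x: "x \<in> carrier G" "x \<notin> S" "x [^] p \<in> S"
    by (rule exists_prime_pow_mem[OF fin S p])
  then obtain y where y: "y \<in> carrier G" "y \<notin> S" "y [^] p \<in> K"
    using exists_prime_root_in_subgroup[OF fin g max K avoid p] unfolding S_def by blast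
  show ?thesis
  proof (rule that)
    show "subgroup (adjoin G K y) G" by (rule subgroup_adjoin[OF K y(1)])
    show "card (adjoin G K y) = p * card K" by (rule card_adjoin_prime_root[OF K S KS y(1,2) p y(3)])
    fix t :: int assume "g [^] t \<in> adjoin G K y"
    moreover have "g [^] t \<in> S" unfolding S_def by (rule pow_mem_adjoin[OF K g])
    ultimately have "g [^] t \<in> K" using adjoin_prime_root_inter[OF K S KS y(1,2) p y(3)] by blast
    then show "g [^] t = \<one>" by (rule avoid)
  qed
qed

lemma exists_subgroup_trivial_inter:
  assumes fin: "finite (carrier G)" and g: "g \<in> carrier G"
    and max: "\<And>x. x \<in> carrier G \<Longrightarrow> ord x dvd ord g"
    and dvd: "d * ord g dvd order G"
  shows "\<exists>K. subgroup K G \<and> card K = d \<and> (\<forall>t::int. g [^] t \<in> K \<longrightarrow> g [^] t = \<one>)"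
  using dvd
proof (induction d rule: less_induct)
  case (less d)
  show ?case
  proof (cases "d = 1")
    case True
    then show ?thesis using triv_subgroup by (intro exI[of _ "{\<one>}"]) auto
  next
    case False
    have "d \<noteq> 0" using less.prems fin order_gt_0_iff_finite by (auto simp: dvd_0_left_iff)
    obtain p where p: "Factorial_Ring.prime p" "p dvd d" using prime_factor_nat[OF False] by blast
    then obtain d' where d: "d = p * d'" by (elim dvdE)
    have "d' < d" using d \<open>d \<noteq> 0\<close> prime_gt_1_nat[OF p(1)] by simp
    moreover have "d' * ord g dvd order G"
      using less.prems d by (metis dvd_mult_right mult.assoc)
    ultimately obtain K where K: "subgroup K G" "card K = d'"
      and avoid: "\<And>t::int. g [^] t \<in> K \<Longrightarrow> g [^] t = \<one>"
      using less.IH by blast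
    have "p * card K * ord g dvd order G" using less.prems d K(2) by simp
    then obtain K' where "subgroup K' G" "card K' = p * card K"
      "\<And>t::int. g [^] t \<in> K' \<Longrightarrow> g [^] t = \<one>"
      using extend_subgroup_trivial_inter[OF fin g max K(1) avoid p(1)] by blast
    then show ?thesis using K(2) d by blast
  qed
qed

end

definition lattice_box :: "int \<Rightarrow> int set \<Rightarrow> int \<Rightarrow> int set" where
  "lattice_box m I d = (\<lambda>(i, j). i + m * j) ` (I \<times> {0..<d})"

lemma card_lattice_box_le: "finite I \<Longrightarrow> card (lattice_box m I d) \<le> card I * nat d"
  unfolding lattice_box_def using card_image_le[of "I \<times> {0..<d}"] by (simp add: card_cartesian_product)

lemma card_lattice_box:
  assumes "I \<subseteq> {0..<m}"
  shows "card (lattice_box m I d) = card I * nat d"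
proof -
  have "inj_on (\<lambda>(i, j). i + m * j) (I \<times> {0..<d})"
  proof (rule inj_onI)
    fix x y assume "x \<in> I \<times> {0..<d}" "y \<in> I \<times> {0..<d}"
      and eq: "(\<lambda>(i, j). i + m * j) x = (\<lambda>(i, j). i + m * j) y"
    moreover obtain i1 j1 i2 j2 where xy: "x = (i1, j1)" "y = (i2, j2)" by fastforce
    ultimately have i: "i1 \<in> {0..<m}" "i2 \<in> {0..<m}" and eq': "i1 + m * j1 = i2 + m * j2"
      using assms by auto
    have "i1 = (i1 + m * j1) mod m" using i by simp
    also have "\<dots> = i2" using eq' i by simp
    finally have "i1 = i2" .
    with eq' i show "x = y" using xy by auto
  qed
  then show ?thesis unfolding lattice_box_def by (simp add: card_image card_cartesian_product)
qed

lemma lattice_box_subset: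
  assumes "I \<subseteq> {0..<m}"
  shows "lattice_box m I d \<subseteq> {0..<m * d}"
proof
  fix t assume "t \<in> lattice_box m I d"
  then obtain i j where ij: "i \<in> I" "0 \<le> j" "j < d" "t = i + m * j"
    unfolding lattice_box_def by auto
  have "m * j \<le> m * (d - 1)" using ij assms by (intro mult_left_mono) auto
  then show "t \<in> {0..<m * d}" using ij assms by (auto simp: algebra_simps)
qed

lemma lattice_box_diff:
  assumes "t1 \<in> lattice_box m {0..<k} d" "t2 \<in> lattice_box m {0..<k} d"
  shows "\<exists>t \<in> lattice_box m {1 - k..<k} d. (t1 - t2) mod (m * d) = t mod (m * d)"
proof -
  obtain i1 j1 i2 j2 where ij: "i1 \<in> {0..<k}" "j1 \<in> {0..<d}" "t1 = i1 + m * j1"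
    "i2 \<in> {0..<k}" "j2 \<in> {0..<d}" "t2 = i2 + m * j2"
    using assms unfolding lattice_box_def by auto
  show ?thesis
  proof (cases "j2 \<le> j1")
    case True
    then have "t1 - t2 \<in> lattice_box m {1 - k..<k} d"
      unfolding lattice_box_def using ij
      by (intro image_eqI[of _ _ "(i1 - i2, j1 - j2)"]) (auto simp: algebra_simps)
    then show ?thesis by blast
  next
    case False
    then have "t1 - t2 + m * d \<in> lattice_box m {1 - k..<k} d"
      unfolding lattice_box_def using ij
      by (intro image_eqI[of _ _ "(i1 - i2, j1 - j2 + d)"]) (auto simp: algebra_simps)
    then show ?thesis by (intro bexI) simp_all
  qed
qed

lemma diff_set_mono: "A \<subseteq> B \<Longrightarrow> diff_set G A \<subseteq> diff_set G B"
  unfolding diff_set_def by blast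

lemma rho_minus_le:
  assumes "finite (carrier G)" "A \<subseteq> carrier G" "card A = r"
  shows "rho_minus G r \<le> card (diff_set G A)"
proof -
  have "{card (diff_set G A) | A. A \<subseteq> carrier G \<and> card A = r}
      \<subseteq> (\<lambda>A. card (diff_set G A)) ` Pow (carrier G)" by blast
  then have "finite {card (diff_set G A) | A. A \<subseteq> carrier G \<and> card A = r}"
    using assms(1) finite_subset by blast
  then show ?thesis unfolding rho_minus_def using assms(2,3) by (intro Min_le) auto
qed

lemma (in group) card_pow_image:
  assumes K: "subgroup K G" and g: "g \<in> carrier G"
    and avoid: "\<And>t::int. g [^] t \<in> K \<Longrightarrow> g [^] t = \<one>" and I: "I \<subseteq> {0..<int (ord g)}"
  shows "card ((\<lambda>(h, t). h \<otimes> g [^] t) ` (K \<times> I)) = card K * card I"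
proof -
  have "inj_on (\<lambda>(h, t). h \<otimes> g [^] t) (K \<times> {0..<int (ord g)})"
    using inj_on_adjoin_param[OF K g] pow_not_mem_of_trivial_inter[OF g avoid] by blast
  then have "inj_on (\<lambda>(h, t). h \<otimes> g [^] t) (K \<times> I)"
    by (rule inj_on_subset) (use I in auto)
  then show ?thesis by (simp add: card_image card_cartesian_product)
qed

lemma (in comm_group) diff_set_pow_image_subset:
  fixes I T :: "int set"
  assumes K: "subgroup K G" and g: "g \<in> carrier G"
    and IT: "\<And>t1 t2. t1 \<in> I \<Longrightarrow> t2 \<in> I \<Longrightarrow> \<exists>t \<in> T. g [^] (t1 - t2) = g [^] t"
  shows "diff_set G ((\<lambda>(h, t). h \<otimes> g [^] t) ` (K \<times> I)) \<subseteq> (\<lambda>(h, t). h \<otimes> g [^] t) ` (K \<times> T)"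
proof
  fix x assume "x \<in> diff_set G ((\<lambda>(h, t). h \<otimes> g [^] t) ` (K \<times> I))"
  then obtain h1 t1 h2 t2 where h: "h1 \<in> K" "h2 \<in> K" and t: "t1 \<in> I" "t2 \<in> I"
    and x: "x = (h1 \<otimes> g [^] t1) \<otimes> inv (h2 \<otimes> g [^] t2)"
    unfolding diff_set_def by auto
  have hc: "h1 \<in> carrier G" "h2 \<in> carrier G" using h K subgroup.subset by auto
  obtain t where "t \<in> T" "g [^] (t1 - t2) = g [^] t" using IT[OF t] by blast
  moreover have "x = (h1 \<otimes> inv h2) \<otimes> g [^] (t1 - t2)"
    using x hc g by (simp add: inv_mult int_pow_diff m_ac)
  moreover have "h1 \<otimes> inv h2 \<in> K" using K h by (simp add: subgroup.m_closed subgroup.m_inv_closed)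
  ultimately show "x \<in> (\<lambda>(h, t). h \<otimes> g [^] t) ` (K \<times> T)" by force
qed

lemma (in comm_group) rho_minus_le_box:
  assumes fin: "finite (carrier G)" and g: "g \<in> carrier G"
    and K: "subgroup K G" and avoid: "\<And>t::int. g [^] t \<in> K \<Longrightarrow> g [^] t = \<one>"
    and md: "ord g = m * d" and k: "k \<le> m" and r: "r \<le> card K * k * d"
  shows "rho_minus G r \<le> card K * (2 * k - 1) * d"
proof -
  define f where "f = (\<lambda>(h, t). h \<otimes> g [^] (t::int))"
  define I where "I = lattice_box (int m) {0..<int k} (int d)"
  define T where "T = lattice_box (int m) {1 - int k..<int k} (int d)"
  have Kc: "K \<subseteq> carrier G" using K subgroup.subset by blast
  have finK: "finite K" using fin Kc finite_subset by blast
  have "{0..<int k} \<subseteq> {0..<int m}" using k by auto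
  then have I: "I \<subseteq> {0..<int (ord g)}" and "card I = k * d"
    unfolding I_def md using lattice_box_subset card_lattice_box by auto
  then have "card (f ` (K \<times> I)) = card K * k * d"
    unfolding f_def by (simp add: card_pow_image[OF K g avoid] mult.assoc)
  then obtain A where A: "A \<subseteq> f ` (K \<times> I)" "card A = r"
    using r by (metis obtain_subset_with_card_n)
  have "\<exists>t \<in> T. g [^] (t1 - t2) = g [^] t" if t: "t1 \<in> I" "t2 \<in> I" for t1 t2
  proof -
    obtain t where "t \<in> T" "(t1 - t2) mod int (ord g) = t mod int (ord g)"
      using lattice_box_diff[OF t[unfolded I_def]] unfolding T_def md by auto
    then show ?thesis using int_pow_eq[OF g] by (metis mod_eq_dvd_iff dvd_diff_commute)
  qed
  then have diff_sub: "diff_set G A \<subseteq> f ` (K \<times> T)"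
    using diff_set_mono[OF A(1)] diff_set_pow_image_subset[OF K g] unfolding f_def by blast
  have finT: "finite T" unfolding T_def lattice_box_def by (intro finite_imageI) simp
  have cardT: "card T \<le> (2 * k - 1) * d"
    using card_lattice_box_le[of "{1 - int k..<int k}" "int m" "int d"]
    unfolding T_def by (simp add: nat_diff_distrib' nat_mult_distrib)
  have "f ` (K \<times> I) \<subseteq> carrier G" using Kc g unfolding f_def by auto
  then have "rho_minus G r \<le> card (diff_set G A)" using rho_minus_le[OF fin _ A(2)] A(1) by blast
  also have "\<dots> \<le> card (f ` (K \<times> T))"
    using diff_sub finK finT by (intro card_mono) simp_all
  also have "\<dots> \<le> card K * card T"
    using card_image_le[of "K \<times> T" f] finK finT by (simp add: card_cartesian_product)
  also have "\<dots> \<le> card K * (2 * k - 1) * d" using cardT by (simp add: mult.assoc)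
  finally show ?thesis .
qed

lemma ceiling_divide_bounds:
  fixes r d m :: nat
  assumes "1 \<le> r" "0 < d" "r \<le> d * m"
  shows "int (nat \<lceil>real r / real d\<rceil>) = \<lceil>real r / real d\<rceil>" "1 \<le> nat \<lceil>real r / real d\<rceil>"
    "nat \<lceil>real r / real d\<rceil> \<le> m" "r \<le> nat \<lceil>real r / real d\<rceil> * d"
proof -
  have pos: "0 < real r / real d" using assms by simp
  then show "int (nat \<lceil>real r / real d\<rceil>) = \<lceil>real r / real d\<rceil>" "1 \<le> nat \<lceil>real r / real d\<rceil>"
    by linarith+
  have "real r / real d \<le> real m"
    using assms by (simp add: pos_divide_le_eq mult.commute flip: of_nat_mult)
  then show "nat \<lceil>real r / real d\<rceil> \<le> m" by (simp add: ceiling_le_iff nat_le_iff)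
  have "real r / real d \<le> real (nat \<lceil>real r / real d\<rceil>)" using pos by linarith
  then have "real r \<le> real (nat \<lceil>real r / real d\<rceil> * d)"
    using assms(2) by (simp only: of_nat_mult pos_divide_le_eq of_nat_0_less_iff)
  then show "r \<le> nat \<lceil>real r / real d\<rceil> * d" by (simp only: of_nat_le_iff)
qed

lemma (in group) group_exponent_dvd_order:
  "finite (carrier G) \<Longrightarrow> group_exponent G dvd order G"
  unfolding group_exponent_def by (auto intro: Lcm_least ord_dvd_group_order)

lemma (in comm_group) rho_minus_le_divisor_bound:
  assumes fin: "finite (carrier G)" and r: "1 \<le> r"
    and d1: "d1 dvd order G div group_exponent G" "0 < d1"
    and d2: "d2 dvd group_exponent G" "0 < d2"
    and r_le: "r \<le> d1 * group_exponent G"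
  shows "int (rho_minus G r) \<le> int (d1 * d2) * (2 * \<lceil>real r / real (d1 * d2)\<rceil> - 1)"
proof -
  obtain g where g: "g \<in> carrier G" and max: "\<And>x. x \<in> carrier G \<Longrightarrow> ord x dvd ord g"
    using exists_ord_dvd_all[OF fin] by blast
  have e: "group_exponent G = ord g" by (rule group_exponent_eq_ord[OF g max])
  have "d1 * ord g dvd order G"
    using d1(1) ord_dvd_group_order[OF g] ord_ge_1[OF fin g] unfolding e
    by (simp add: dvd_div_iff_mult)
  then obtain K where K: "subgroup K G" "card K = d1"
    and avoid: "\<And>t::int. g [^] t \<in> K \<Longrightarrow> g [^] t = \<one>"
    using exists_subgroup_trivial_inter[OF fin g max] by blast
  define m where "m = ord g div d2"
  have md: "ord g = m * d2" unfolding m_def using d2(1) e by simp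
  define k where "k = nat \<lceil>real r / real (d1 * d2)\<rceil>"
  have d: "0 < d1 * d2" using d1(2) d2(2) by simp
  have "r \<le> (d1 * d2) * m" using r_le md e by (simp add: mult_ac)
  note k_facts = ceiling_divide_bounds[OF r d this, folded k_def]
  have "r \<le> card K * k * d2" using k_facts(4) d1(2) d2(2) K(2) by (simp add: mult_ac)
  then have "rho_minus G r \<le> d1 * (2 * k - 1) * d2"
    using rho_minus_le_box[OF fin g K(1) avoid md k_facts(3)] d1(2) d2(2) K(2) by simp
  then have "int (rho_minus G r) \<le> int d1 * int (2 * k - 1) * int d2"
    by (simp only: of_nat_mult[symmetric] of_nat_le_iff)
  also have "\<dots> = int (d1 * d2) * (2 * int k - 1)" using k_facts(2) by (simp add: of_nat_diff)
  finally show ?thesis using k_facts(1) by simp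
qed

lemma finite_pos_divisors: "0 < n \<Longrightarrow> finite (pos_divisors n)"
  unfolding pos_divisors_def by (rule finite_subset[of _ "{..n}"]) (auto intro: dvd_imp_le)

lemma finite_Dset:
  assumes "0 < N div e" "0 < e"
  shows "finite (Dset N e r)"
proof (rule finite_subset)
  show "Dset N e r \<subseteq> (\<lambda>(a, b). a * b) ` (pos_divisors (N div e) \<times> pos_divisors e)"
    unfolding Dset_def by force
  show "finite ((\<lambda>(a, b). a * b) ` (pos_divisors (N div e) \<times> pos_divisors e))"
    using finite_pos_divisors assms by blast
qed

theorem mainTheorem1:
  fixes G :: "('a, 'b) monoid_scheme" and r :: nat
  assumes "comm_group G"
    and "finite (carrier G)"
    and "1 \<le> r" and "r \<le> card (carrier G)"
  shows "int (rho_minus G r) \<le>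
    Min ((\<lambda>d. int d * (2 * \<lceil>real r / real d\<rceil> - 1))
          ` Dset (card (carrier G)) (group_exponent G) r)"
proof -
  interpret comm_group G by (fact assms(1))
  define N where "N = card (carrier G)"
  define e where "e = group_exponent G"
  have N: "N = order G" "0 < N" unfolding N_def order_def using assms(2) by (auto simp: card_gt_0_iff)
  have "e dvd N" unfolding e_def N(1) by (rule group_exponent_dvd_order[OF assms(2)])
  then have e: "0 < e" "0 < N div e" "N div e * e = N" using N(2) by (auto intro: Nat.gr0I)
  have "N div e * 1 \<in> Dset N e r"
    unfolding Dset_def pos_divisors_def using e assms(4) N_def by fastforce
  moreover have "int (rho_minus G r) \<le> int d * (2 * \<lceil>real r / real d\<rceil> - 1)" if "d \<in> Dset N e r" for d
    using that rho_minus_le_divisor_bound[OF assms(2,3)] N(1)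
    unfolding Dset_def pos_divisors_def e_def by auto
  ultimately show ?thesis
    using finite_Dset[OF e(2,1)] unfolding N_def e_def by (subst Min_ge_iff) auto
qed

end
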